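(* Let $n\neq 1$ be a real number, $k_n=n-1$, and $k_0,k_1,k_2\in\mathbb{R}$. On the phase space with canonical coordinates $(r,\phi,p_r,p_\phi)$, $r>0$, restricted to the open set where $\sin(k_n\phi)\neq 0$, consider $$H_{nc1}=\tfrac12 r^{2n}\Big(p_r^2+\tfrac{p_\phi^2}{r^2}\Big)+k_0r^{n-1}+r^{2k_n}\Big(\frac{k_1}{\sin^2(k_n\phi)}+k_2\frac{\cos(k_n\phi)}{\sin^2(k_n\phi)}\Big).$$ With $P_2=r^n\big(p_r\sin(k_n\phi)-\tfrac1r p_\phi\cos(k_n\phi)\big)$, define $$J_{c2}=p_\phi^2+2\Big(\frac{k_1}{\sin^2(k_n\phi)}+k_2\frac{\cos(k_n\phi)}{\sin^2(k_n\phi)}\Big),$$ $$J_{c3}=P_2p_\phi-k_0\cos(k_n\phi)-2k_1r^{k_n}\csc(k_n\phi)\cot(k_n\phi)-k_2r^{k_n}\big(\csc^2(k_n\phi)+\cot^2(k_n\phi)\big).$$ Then $\{J_{c2},H_{nc1}\}=0$, $\{J_{c3},H_{nc1}\}=0$, and $dJ_{c2}\wedge dJ_{c3}\wedge dH_{nc1}\neq 0$; hence $H_{nc1}$ is superintegrable.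
   Context: The Poisson bracket is the canonical one in $(r,\phi,p_r,p_\phi)$. *)

theory Defs
  imports "HOL-Analysis.Analysis"
begin

text \<open>Phase-space functions are curried functions of the canonical coordinates
  (r, phi, p_r, p_phi).\<close>

type_synonym phasefun = "real \<Rightarrow> real \<Rightarrow> real \<Rightarrow> real \<Rightarrow> real"

definition d_r :: "phasefun \<Rightarrow> phasefun" where
  "d_r F r f pr pf = deriv (\<lambda>t. F t f pr pf) r"
definition d_phi :: "phasefun \<Rightarrow> phasefun" where
  "d_phi F r f pr pf = deriv (\<lambda>t. F r t pr pf) f"
definition d_pr :: "phasefun \<Rightarrow> phasefun" where
  "d_pr F r f pr pf = deriv (\<lambda>t. F r f t pf) pr"
definition d_pphi :: "phasefun \<Rightarrow> phasefun" where
  "d_pphi F r f pr pf = deriv (\<lambda>t. F r f pr t) pf"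

definition poisson :: "phasefun \<Rightarrow> phasefun \<Rightarrow> phasefun" where
  "poisson F G r f pr pf =
     d_r F r f pr pf * d_pr G r f pr pf - d_pr F r f pr pf * d_r G r f pr pf
   + d_phi F r f pr pf * d_pphi G r f pr pf - d_pphi F r f pr pf * d_phi G r f pr pf"

definition grad :: "phasefun \<Rightarrow> real \<Rightarrow> real \<Rightarrow> real \<Rightarrow> real \<Rightarrow> nat \<Rightarrow> real" where
  "grad F r f pr pf i =
     (if i = 0 then d_r F r f pr pf else if i = 1 then d_phi F r f pr pf
      else if i = 2 then d_pr F r f pr pf else d_pphi F r f pr pf)"

text \<open>Component of the 3-form dF \<and> dG \<and> dK on the basis element dx_i \<and> dx_j \<and> dx_k
  (indices 0..3 for r, phi, p_r, p_phi): the 3x3 determinant of the gradient columns.\<close>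
definition wedge3 :: "phasefun \<Rightarrow> phasefun \<Rightarrow> phasefun \<Rightarrow> real \<Rightarrow> real \<Rightarrow> real \<Rightarrow> real
    \<Rightarrow> nat \<Rightarrow> nat \<Rightarrow> nat \<Rightarrow> real" where
  "wedge3 F G K r f pr pf i j k =
    (let a = grad F r f pr pf; b = grad G r f pr pf; c = grad K r f pr pf in
       a i * (b j * c k - b k * c j) - a j * (b i * c k - b k * c i)
     + a k * (b i * c j - b j * c i))"

definition wedge3_nonzero_at :: "phasefun \<Rightarrow> phasefun \<Rightarrow> phasefun \<Rightarrow> real \<Rightarrow> real \<Rightarrow> real \<Rightarrow> real \<Rightarrow> bool" where
  "wedge3_nonzero_at F G K r f pr pf \<longleftrightarrow>
     (\<exists>i j k. i < j \<and> j < k \<and> k < 4 \<and> wedge3 F G K r f pr pf i j k \<noteq> 0)"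

definition Hnc1 :: "real \<Rightarrow> real \<Rightarrow> real \<Rightarrow> real \<Rightarrow> phasefun" where
  "Hnc1 n k0 k1 k2 r f pr pf =
     (let kn = n - 1 in
      1/2 * r powr (2*n) * (pr^2 + pf^2 / r^2) + k0 * r powr (n - 1)
      + r powr (2*kn) * (k1 / (sin (kn*f))^2 + k2 * cos (kn*f) / (sin (kn*f))^2))"

definition P2 :: "real \<Rightarrow> phasefun" where
  "P2 n r f pr pf = (let kn = n - 1 in r powr n * (pr * sin (kn*f) - 1/r * pf * cos (kn*f)))"

definition Jc2 :: "real \<Rightarrow> real \<Rightarrow> real \<Rightarrow> phasefun" where
  "Jc2 n k1 k2 r f pr pf =
     (let kn = n - 1 in
      pf^2 + 2 * (k1 / (sin (kn*f))^2 + k2 * cos (kn*f) / (sin (kn*f))^2))"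

definition Jc3 :: "real \<Rightarrow> real \<Rightarrow> real \<Rightarrow> real \<Rightarrow> phasefun" where
  "Jc3 n k0 k1 k2 r f pr pf =
     (let kn = n - 1; csc = 1 / sin (kn*f); ct = cos (kn*f) / sin (kn*f) in
      P2 n r f pr pf * pf - k0 * cos (kn*f) - 2 * k1 * r powr kn * csc * ct
      - k2 * r powr kn * (csc^2 + ct^2))"

definition dom_nc1 :: "real \<Rightarrow> (real \<times> real \<times> real \<times> real) set" where
  "dom_nc1 n = {(r, f, pr, pf). r > 0 \<and> sin ((n - 1) * f) \<noteq> 0}"

end

theory Submission imports Defs begin

text \<open>With \<open>k\<^sub>n = n - 1\<close> one has
  \<open>H = r\<^sup>2\<^sup>n p\<^sub>r\<^sup>2 / 2 + k\<^sub>0 r\<^sup>k\<^sup>n + r\<^sup>2\<^sup>k\<^sup>n J\<^sub>c\<^sub>2 / 2\<close>: the Hamiltonian depends on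
  \<open>(\<phi>, p\<^sub>\<phi>)\<close> only through \<open>J\<^sub>c\<^sub>2\<close>, which involves no other coordinates, so the two
  commute. The bracket with \<open>J\<^sub>c\<^sub>3\<close> is a direct computation: after clearing the powers of \<open>r\<close>
  and of \<open>sin(k\<^sub>n\<phi>)\<close> it is a polynomial identity modulo \<open>sin\<^sup>2 + cos\<^sup>2 = 1\<close>.
  Independence is seen at \<open>r = 1\<close>, \<open>p\<^sub>r = 0\<close>, \<open>k\<^sub>n\<phi> = \<pi>/2\<close>, where the
  \<open>dr \<and> dp\<^sub>r \<and> dp\<^sub>\<phi>\<close> component of the 3-form is
  \<open>-2 k\<^sub>n p\<^sub>\<phi>\<^sup>2 (p\<^sub>\<phi>\<^sup>2 + k\<^sub>0 + 2k\<^sub>1)\<close>, nonzero for large \<open>p\<^sub>\<phi>\<close>.\<close>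

lemma powr_in_terms_of_powr:
  fixes r n :: real
  assumes "r > 0"
  shows "r powr (2*n) = (r powr n)^2"
    and "r powr (n - 1) = r powr n / r"
    and "r powr (2*(n - 1)) = (r powr n)^2 / r^2"
    and "r powr (2*n - 1) = (r powr n)^2 / r"
    and "r powr (n - 1 - 1) = r powr n / r^2"
    and "r powr (2*(n - 1) - 1) = (r powr n)^2 / r^3"
    and "r powr (n - 2) = r powr n / r^2"
    and "r powr (2*n - 2) = (r powr n)^2 / r^2"
    and "r powr (2*n - 3) = (r powr n)^2 / r^3"
    and "r powr (n - 3) = r powr n / r^3"
  using assms
  by (simp_all add: powr_diff powr_mult_base power2_eq_square powr_add[symmetric]
      algebra_simps power3_eq_cube flip: mult_2)

lemma d_r_Hnc1:
  assumes "r > 0"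
  shows "d_r (Hnc1 n k0 k1 k2) r f pr pf =
    n*(r powr n)^2/r*(pr^2 + pf^2/r^2) - (r powr n)^2*pf^2/r^3 + k0*(n-1)*(r powr n)/r^2
    + 2*(n-1)*(r powr n)^2/r^3 * (k1/(sin ((n-1)*f))^2 + k2*cos ((n-1)*f)/(sin ((n-1)*f))^2)"
  unfolding d_r_def Hnc1_def Let_def
  apply (rule DERIV_imp_deriv)
  apply (rule derivative_eq_intros refl assms | (use assms in \<open>simp; fail\<close>))+
  using assms by (simp add: powr_in_terms_of_powr) (simp add: field_simps eval_nat_numeral)

lemma d_phi_Hnc1:
  assumes "r > 0" "sin ((n-1)*f) \<noteq> 0"
  shows "d_phi (Hnc1 n k0 k1 k2) r f pr pf =
    (r powr n)^2/r^2 * ((n-1)*(-k2*(sin ((n-1)*f))^2 - 2*cos ((n-1)*f)*(k1 + k2*cos ((n-1)*f)))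
      / (sin ((n-1)*f))^3)"
  unfolding d_phi_def Hnc1_def Let_def
  apply (rule DERIV_imp_deriv)
  apply (rule derivative_eq_intros refl assms | (use assms in \<open>simp; fail\<close>))+
  using assms by (simp add: powr_in_terms_of_powr) (simp add: field_simps eval_nat_numeral)

lemma d_pr_Hnc1: "d_pr (Hnc1 n k0 k1 k2) r f pr pf = (r powr n)^2 * pr"
  unfolding d_pr_def Hnc1_def Let_def
  apply (rule DERIV_imp_deriv)
  apply (rule derivative_eq_intros refl | (simp; fail))+
  by (simp add: powr_mult_base power2_eq_square powr_add[symmetric] flip: mult_2)

lemma d_pphi_Hnc1:
  assumes "r > 0"
  shows "d_pphi (Hnc1 n k0 k1 k2) r f pr pf = (r powr n)^2 * pf / r^2"
  unfolding d_pphi_def Hnc1_def Let_def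
  apply (rule DERIV_imp_deriv)
  apply (rule derivative_eq_intros refl assms | (use assms in \<open>simp; fail\<close>))+
  using assms by (simp add: powr_in_terms_of_powr) (simp add: field_simps)

lemma d_r_Jc2: "d_r (Jc2 n k1 k2) r f pr pf = 0"
  unfolding d_r_def Jc2_def Let_def by simp

lemma d_pr_Jc2: "d_pr (Jc2 n k1 k2) r f pr pf = 0"
  unfolding d_pr_def Jc2_def Let_def by simp

lemma d_phi_Jc2:
  assumes "sin ((n-1)*f) \<noteq> 0"
  shows "d_phi (Jc2 n k1 k2) r f pr pf =
    2 * ((n-1)*(-k2*(sin ((n-1)*f))^2 - 2*cos ((n-1)*f)*(k1 + k2*cos ((n-1)*f)))
      / (sin ((n-1)*f))^3)"
  unfolding d_phi_def Jc2_def Let_def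
  apply (rule DERIV_imp_deriv)
  apply (rule derivative_eq_intros refl assms | (use assms in \<open>simp; fail\<close>))+
  using assms by (simp add: field_simps eval_nat_numeral)

lemma d_pphi_Jc2: "d_pphi (Jc2 n k1 k2) r f pr pf = 2 * pf"
  unfolding d_pphi_def Jc2_def Let_def
  by (rule DERIV_imp_deriv) (rule derivative_eq_intros refl | (simp; fail))+

lemma d_r_Jc3:
  assumes "r > 0" "sin ((n-1)*f) \<noteq> 0"
  shows "d_r (Jc3 n k0 k1 k2) r f pr pf =
    n*(r powr n)/r*(pr * sin ((n-1)*f) - pf*cos ((n-1)*f)/r)*pf
    + (r powr n)*pf^2*cos ((n-1)*f)/r^2
    - (n-1)*(r powr n)/r^2 * ((2*k1*cos ((n-1)*f) + k2*(1 + (cos ((n-1)*f))^2))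
      / (sin ((n-1)*f))^2)"
  unfolding d_r_def Jc3_def P2_def Let_def
  apply (rule DERIV_imp_deriv)
  apply (rule derivative_eq_intros refl assms | (use assms in \<open>simp; fail\<close>))+
  using assms by (simp add: powr_in_terms_of_powr) (simp add: field_simps eval_nat_numeral)

lemma d_phi_Jc3:
  assumes "r > 0" "sin ((n-1)*f) \<noteq> 0"
  shows "d_phi (Jc3 n k0 k1 k2) r f pr pf =
    r powr n*(n-1)*(pr*cos ((n-1)*f) + pf * sin ((n-1)*f)/r)*pf + k0*(n-1) * sin ((n-1)*f)
    - r powr n/r * ((n-1)*((-2*k1 - 2*k2*cos ((n-1)*f))*(sin ((n-1)*f))^2
        - 2*cos ((n-1)*f)*(2*k1*cos ((n-1)*f) + k2 + k2*(cos ((n-1)*f))^2))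
      / (sin ((n-1)*f))^3)"
proof -
  define s c where "s = sin ((n-1)*f)" and "c = cos ((n-1)*f)"
  have "((\<lambda>t. Jc3 n k0 k1 k2 r t pr pf) has_real_derivative
    r powr n*(n-1)*(pr*c + pf * s/r)*pf + k0*(n-1) * s
    - r powr n/r * ((n-1)*((-2*k1 - 2*k2*c) * s^2 - 2*c*(2*k1*c + k2 + k2*c^2))/s^3)) (at f)"
    unfolding Jc3_def P2_def Let_def
    apply (rule derivative_eq_intros refl assms | (use assms in \<open>simp; fail\<close>))+
    using assms apply (simp add: powr_in_terms_of_powr)
    unfolding s_def[symmetric] c_def[symmetric]
    using assms by (simp add: s_def field_simps eval_nat_numeral)
  then show ?thesis
    unfolding d_phi_def s_def c_def by (rule DERIV_imp_deriv)
qed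

lemma d_pr_Jc3: "d_pr (Jc3 n k0 k1 k2) r f pr pf = r powr n * sin ((n-1)*f) * pf"
  unfolding d_pr_def Jc3_def P2_def Let_def
  by (rule DERIV_imp_deriv) (rule derivative_eq_intros refl | (simp; fail))+

lemma d_pphi_Jc3:
  "d_pphi (Jc3 n k0 k1 k2) r f pr pf = r powr n * (pr * sin ((n-1)*f) - 2*pf*cos ((n-1)*f)/r)"
  unfolding d_pphi_def Jc3_def P2_def Let_def
  apply (rule DERIV_imp_deriv)
  apply (rule derivative_eq_intros refl | (simp; fail))+
  by (simp add: field_simps)

lemma poisson_Jc2_Hnc1:
  assumes "r > 0" "sin ((n-1)*f) \<noteq> 0"
  shows "poisson (Jc2 n k1 k2) (Hnc1 n k0 k1 k2) r f pr pf = 0"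
  unfolding poisson_def d_r_Jc2 d_pr_Jc2 d_phi_Jc2[OF assms(2)] d_pphi_Jc2
    d_r_Hnc1[OF assms(1)] d_pr_Hnc1 d_phi_Hnc1[OF assms] d_pphi_Hnc1[OF assms(1)]
  by (simp add: field_simps)

text \<open>The bracket \<open>{J\<^sub>c\<^sub>3, H}\<close> with \<open>A = r\<^sup>n\<close>, \<open>u = 1/r\<close>, \<open>s = sin(k\<^sub>n\<phi>)\<close>,
  \<open>c = cos(k\<^sub>n\<phi>)\<close>, \<open>v = 1/s\<close>.\<close>

lemma poisson_Jc3_Hnc1_polynomial:
  fixes A u s v c n k0 k1 k2 pr pf :: real
  assumes "s * v = 1" and "s^2 + c^2 = 1"
  shows "(n*A*u*(pr * s - pf*c*u)*pf + A*pf^2*c*u^2 - (n-1)*A*u^2*((2*k1*c + k2*(1 + c^2)) * v^2))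
           * (A^2*pr)
        - (A * s*pf) * (n*A^2*u*(pr^2 + pf^2*u^2) - A^2*pf^2*u^3 + k0*(n-1)*A*u^2
              + 2*(n-1)*A^2*u^3*(k1 * v^2 + k2*c * v^2))
        + (A*(n-1)*(pr*c + pf * s*u)*pf + k0*(n-1) * s
            - A*u*((n-1)*((-2*k1 - 2*k2*c) * s^2 - 2*c*(2*k1*c + k2 + k2*c^2)) * v^3)) * (A^2*pf*u^2)
        - (A*(pr * s - 2*pf*c*u)) * (A^2*u^2*((n-1)*(-k2 * s^2 - 2*c*(k1 + k2*c)) * v^3)) = 0"
  using assms by algebra

lemma poisson_Jc3_Hnc1:
  assumes "r > 0" "sin ((n-1)*f) \<noteq> 0"
  shows "poisson (Jc3 n k0 k1 k2) (Hnc1 n k0 k1 k2) r f pr pf = 0"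
proof -
  let ?s = "sin ((n-1)*f)" and ?c = "cos ((n-1)*f)"
  have "?s * inverse ?s = 1" and "?s^2 + ?c^2 = 1"
    using assms(2) by simp_all
  from poisson_Jc3_Hnc1_polynomial[OF this, of n "r powr n" "inverse r" pr pf k1 k2 k0]
  show ?thesis
    unfolding poisson_def d_r_Jc3[OF assms] d_pr_Jc3 d_phi_Jc3[OF assms] d_pphi_Jc3
      d_r_Hnc1[OF assms(1)] d_pr_Hnc1 d_phi_Hnc1[OF assms] d_pphi_Hnc1[OF assms(1)]
    using assms by (simp add: divide_inverse power_inverse)
qed

lemma wedge3_Jc2_Jc3_Hnc1_at_sin_one:
  assumes "sin ((n-1)*f) = 1"
  shows "wedge3 (Jc2 n k1 k2) (Jc3 n k0 k1 k2) (Hnc1 n k0 k1 k2) 1 f 0 pf 0 2 3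
    = - 2 * pf^2 * ((n-1) * (pf^2 + k0 + 2*k1))"
proof -
  have "cos ((n-1)*f) = 0"
    using assms sin_cos_squared_add[of "(n-1)*f"] by simp
  then show ?thesis
    unfolding wedge3_def grad_def Let_def
    using assms by (simp add: d_r_Jc2 d_pr_Jc2 d_pphi_Jc2 d_pr_Jc3 d_r_Hnc1 d_pr_Hnc1
        algebra_simps power2_eq_square)
qed

theorem mainTheorem7:
  fixes n k0 k1 k2 :: real
  assumes "n \<noteq> 1"
  shows "(\<forall>(r, f, pr, pf) \<in> dom_nc1 n.
            poisson (Jc2 n k1 k2) (Hnc1 n k0 k1 k2) r f pr pf = 0
          \<and> poisson (Jc3 n k0 k1 k2) (Hnc1 n k0 k1 k2) r f pr pf = 0)
       \<and> (\<exists>(r, f, pr, pf) \<in> dom_nc1 n.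
            wedge3_nonzero_at (Jc2 n k1 k2) (Jc3 n k0 k1 k2) (Hnc1 n k0 k1 k2) r f pr pf)"
proof
  show "\<forall>(r, f, pr, pf) \<in> dom_nc1 n.
            poisson (Jc2 n k1 k2) (Hnc1 n k0 k1 k2) r f pr pf = 0
          \<and> poisson (Jc3 n k0 k1 k2) (Hnc1 n k0 k1 k2) r f pr pf = 0"
    by (auto simp: dom_nc1_def poisson_Jc2_Hnc1 poisson_Jc3_Hnc1)
next
  define f0 where "f0 = pi / (2*(n-1))"
  define q where "q = sqrt (\<bar>k0 + 2*k1\<bar> + 1)"
  have "(n-1)*f0 = pi/2"
    using assms by (simp add: f0_def field_simps)
  then have sin_f0: "sin ((n-1)*f0) = 1"
    by (simp only: sin_pi_half)
  have "q^2 + k0 + 2*k1 > 0" and "q \<noteq> 0"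
    unfolding q_def by auto
  then have "wedge3 (Jc2 n k1 k2) (Jc3 n k0 k1 k2) (Hnc1 n k0 k1 k2) 1 f0 0 q 0 2 3 \<noteq> 0"
    using assms by (simp add: wedge3_Jc2_Jc3_Hnc1_at_sin_one[OF sin_f0])
  then have "wedge3_nonzero_at (Jc2 n k1 k2) (Jc3 n k0 k1 k2) (Hnc1 n k0 k1 k2) 1 f0 0 q"
    unfolding wedge3_nonzero_at_def by (intro exI[of _ 0] exI[of _ 2] exI[of _ 3]) simp
  moreover have "(1, f0, 0, q) \<in> dom_nc1 n"
    using sin_f0 by (simp add: dom_nc1_def)
  ultimately show "\<exists>(r, f, pr, pf) \<in> dom_nc1 n.
            wedge3_nonzero_at (Jc2 n k1 k2) (Jc3 n k0 k1 k2) (Hnc1 n k0 k1 k2) r f pr pf"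
    by blast
qed

end
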